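(* Let $\mathbb A$ be an abelian category with enough projective objects. A morphism $(f_0,f_1):a\to b$ in $\mathbb A^{[1]}_c$, where $a:A_1\to A_0$ and $b:B_1\to B_0$, is cofaithful in $\mathbb A^{[1]}_c$ if and only if the morphism $(f_0,b):A_0\oplus B_1\to B_0$ is an epimorphism in $\mathbb A$.
   Context: Let $\mathbb A$ be an abelian category. The 2-category $\mathbb A^{[1]}$ has as objects the morphisms $a:A_1\to A_0$ of $\mathbb A$. For objects $a:A_1\to A_0$ and $b:B_1\to B_0$, a morphism $a\to b$ is a pair $(f_0,f_1)$ of morphisms $f_i:A_i\to B_i$ of $\mathbb A$ with $b f_1=f_0 a$; composition is componentwise. A 2-arrow $(f_0,f_1)\Rightarrow(g_0,g_1)$ between morphisms $a\to b$ is a morphism $\alpha:A_0\to B_1$ of $\mathbb A$ with $f_1-g_1=\alpha a$ and $f_0-g_0=b\alpha$; vertical composition is addition of such $\alpha$'s, and whiskering is given by $(h_0,h_1)\circ\alpha=h_1\alpha$ and $\alpha\circ(e_0,e_1)=\alpha e_0$. All 2-arrows are invertible, so each $\mathbf{Hom}(a,b)$ is a groupoid. $\mathbb A^{[1]}_c$ is the full 2-subcategory of $\mathbb A^{[1]}$ on the objects $a:A_1\to A_0$ with $A_0$ projective in $\mathbb A$. A morphism $f:a\to b$ of $\mathbb A^{[1]}_c$ is cofaithful in $\mathbb A^{[1]}_c$ if for every object $x$ of $\mathbb A^{[1]}_c$ the functor $-\circ f:\mathbf{Hom}(b,x)\to\mathbf{Hom}(a,x)$ is faithful. *)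

theory Defs
  imports Main
begin

text \<open>A category with objects of type 'o and arrows of type 'm, equipped with
  an additive structure on hom-sets. cmp g f is "g after f".\<close>

record ('o, 'm) acat =
  Ob   :: "'o set"
  Ar   :: "'m set"
  dom  :: "'m \<Rightarrow> 'o"
  cod  :: "'m \<Rightarrow> 'o"
  cmp  :: "'m \<Rightarrow> 'm \<Rightarrow> 'm"
  idt  :: "'o \<Rightarrow> 'm"
  addm :: "'m \<Rightarrow> 'm \<Rightarrow> 'm"
  zer  :: "'o \<Rightarrow> 'o \<Rightarrow> 'm"
  negm :: "'m \<Rightarrow> 'm"

definition hom :: "('o, 'm, 'x) acat_scheme \<Rightarrow> 'o \<Rightarrow> 'o \<Rightarrow> 'm set" where
  "hom C X Y = {f \<in> Ar C. dom C f = X \<and> cod C f = Y}"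

definition subm :: "('o, 'm, 'x) acat_scheme \<Rightarrow> 'm \<Rightarrow> 'm \<Rightarrow> 'm" where
  "subm C f g = addm C f (negm C g)"

definition is_category :: "('o, 'm, 'x) acat_scheme \<Rightarrow> bool" where
  "is_category C \<longleftrightarrow>
     (\<forall>f \<in> Ar C. dom C f \<in> Ob C \<and> cod C f \<in> Ob C) \<and>
     (\<forall>X \<in> Ob C. idt C X \<in> hom C X X) \<and>
     (\<forall>X \<in> Ob C. \<forall>Y \<in> Ob C. \<forall>Z \<in> Ob C. \<forall>f \<in> hom C X Y. \<forall>g \<in> hom C Y Z.
        cmp C g f \<in> hom C X Z) \<and>
     (\<forall>f \<in> Ar C. cmp C f (idt C (dom C f)) = f \<and> cmp C (idt C (cod C f)) f = f) \<and>
     (\<forall>f \<in> Ar C. \<forall>g \<in> Ar C. \<forall>h \<in> Ar C. cod C f = dom C g \<longrightarrow> cod C g = dom C h \<longrightarrow>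
        cmp C h (cmp C g f) = cmp C (cmp C h g) f)"

definition is_preadditive :: "('o, 'm, 'x) acat_scheme \<Rightarrow> bool" where
  "is_preadditive C \<longleftrightarrow> is_category C \<and>
     (\<forall>X \<in> Ob C. \<forall>Y \<in> Ob C.
        zer C X Y \<in> hom C X Y \<and>
        (\<forall>f \<in> hom C X Y. \<forall>g \<in> hom C X Y. addm C f g \<in> hom C X Y) \<and>
        (\<forall>f \<in> hom C X Y. negm C f \<in> hom C X Y) \<and>
        (\<forall>f \<in> hom C X Y. \<forall>g \<in> hom C X Y. \<forall>h \<in> hom C X Y.
            addm C (addm C f g) h = addm C f (addm C g h)) \<and>
        (\<forall>f \<in> hom C X Y. \<forall>g \<in> hom C X Y. addm C f g = addm C g f) \<and>
        (\<forall>f \<in> hom C X Y. addm C f (zer C X Y) = f) \<and>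
        (\<forall>f \<in> hom C X Y. addm C f (negm C f) = zer C X Y)) \<and>
     (\<forall>X \<in> Ob C. \<forall>Y \<in> Ob C. \<forall>Z \<in> Ob C.
        \<forall>f \<in> hom C X Y. \<forall>g \<in> hom C X Y. \<forall>h \<in> hom C Y Z. \<forall>k \<in> hom C Y Z.
          cmp C h (addm C f g) = addm C (cmp C h f) (cmp C h g) \<and>
          cmp C (addm C h k) f = addm C (cmp C h f) (cmp C k f))"

definition is_mono :: "('o, 'm, 'x) acat_scheme \<Rightarrow> 'm \<Rightarrow> bool" where
  "is_mono C m \<longleftrightarrow> m \<in> Ar C \<and>
     (\<forall>g \<in> Ar C. \<forall>h \<in> Ar C. cod C g = dom C m \<longrightarrow> cod C h = dom C m \<longrightarrow>
        dom C g = dom C h \<longrightarrow> cmp C m g = cmp C m h \<longrightarrow> g = h)"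

definition is_epi :: "('o, 'm, 'x) acat_scheme \<Rightarrow> 'm \<Rightarrow> bool" where
  "is_epi C e \<longleftrightarrow> e \<in> Ar C \<and>
     (\<forall>g \<in> Ar C. \<forall>h \<in> Ar C. dom C g = cod C e \<longrightarrow> dom C h = cod C e \<longrightarrow>
        cod C g = cod C h \<longrightarrow> cmp C g e = cmp C h e \<longrightarrow> g = h)"

definition is_kernel :: "('o, 'm, 'x) acat_scheme \<Rightarrow> 'm \<Rightarrow> 'm \<Rightarrow> bool" where
  "is_kernel C k f \<longleftrightarrow> k \<in> Ar C \<and> f \<in> Ar C \<and> cod C k = dom C f \<and>
     cmp C f k = zer C (dom C k) (cod C f) \<and>
     (\<forall>g \<in> Ar C. cod C g = dom C f \<longrightarrow> cmp C f g = zer C (dom C g) (cod C f) \<longrightarrow>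
        (\<exists>!u. u \<in> hom C (dom C g) (dom C k) \<and> cmp C k u = g))"

definition is_cokernel :: "('o, 'm, 'x) acat_scheme \<Rightarrow> 'm \<Rightarrow> 'm \<Rightarrow> bool" where
  "is_cokernel C c f \<longleftrightarrow> c \<in> Ar C \<and> f \<in> Ar C \<and> dom C c = cod C f \<and>
     cmp C c f = zer C (dom C f) (cod C c) \<and>
     (\<forall>g \<in> Ar C. dom C g = cod C f \<longrightarrow> cmp C g f = zer C (dom C f) (cod C g) \<longrightarrow>
        (\<exists>!u. u \<in> hom C (cod C c) (cod C g) \<and> cmp C u c = g))"

definition is_biproduct ::
  "('o, 'm, 'x) acat_scheme \<Rightarrow> 'o \<Rightarrow> 'o \<Rightarrow> 'o \<Rightarrow> 'm \<Rightarrow> 'm \<Rightarrow> 'm \<Rightarrow> 'm \<Rightarrow> bool" where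
  "is_biproduct C X Y S i1 i2 p1 p2 \<longleftrightarrow> S \<in> Ob C \<and>
     i1 \<in> hom C X S \<and> i2 \<in> hom C Y S \<and> p1 \<in> hom C S X \<and> p2 \<in> hom C S Y \<and>
     cmp C p1 i1 = idt C X \<and> cmp C p2 i2 = idt C Y \<and>
     cmp C p1 i2 = zer C Y X \<and> cmp C p2 i1 = zer C X Y \<and>
     addm C (cmp C i1 p1) (cmp C i2 p2) = idt C S"

definition is_zero_object :: "('o, 'm, 'x) acat_scheme \<Rightarrow> 'o \<Rightarrow> bool" where
  "is_zero_object C Z \<longleftrightarrow> Z \<in> Ob C \<and>
     (\<forall>X \<in> Ob C. (\<exists>!f. f \<in> hom C Z X) \<and> (\<exists>!f. f \<in> hom C X Z))"

definition is_abelian :: "('o, 'm, 'x) acat_scheme \<Rightarrow> bool" where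
  "is_abelian C \<longleftrightarrow> is_preadditive C \<and>
     (\<exists>Z. is_zero_object C Z) \<and>
     (\<forall>X \<in> Ob C. \<forall>Y \<in> Ob C. \<exists>S i1 i2 p1 p2. is_biproduct C X Y S i1 i2 p1 p2) \<and>
     (\<forall>f \<in> Ar C. \<exists>k. is_kernel C k f) \<and>
     (\<forall>f \<in> Ar C. \<exists>c. is_cokernel C c f) \<and>
     (\<forall>m. is_mono C m \<longrightarrow> (\<exists>f. is_kernel C m f)) \<and>
     (\<forall>e. is_epi C e \<longrightarrow> (\<exists>f. is_cokernel C e f))"

definition is_projective :: "('o, 'm, 'x) acat_scheme \<Rightarrow> 'o \<Rightarrow> bool" where
  "is_projective C P \<longleftrightarrow> P \<in> Ob C \<and>
     (\<forall>e f. is_epi C e \<longrightarrow> f \<in> hom C P (cod C e) \<longrightarrow>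
        (\<exists>g \<in> hom C P (dom C e). cmp C e g = f))"

definition enough_projectives :: "('o, 'm, 'x) acat_scheme \<Rightarrow> bool" where
  "enough_projectives C \<longleftrightarrow>
     (\<forall>X \<in> Ob C. \<exists>P e. is_projective C P \<and> e \<in> hom C P X \<and> is_epi C e)"

text \<open>Objects of A^[1]_c: arrows a : A1 \<rightarrow> A0 with A0 projective.\<close>
definition arrc_obj :: "('o, 'm, 'x) acat_scheme \<Rightarrow> 'm \<Rightarrow> bool" where
  "arrc_obj C a \<longleftrightarrow> a \<in> Ar C \<and> is_projective C (cod C a)"

text \<open>Morphisms a \<rightarrow> b of A^[1]: pairs (f0, f1) with b f1 = f0 a.\<close>
definition arr_mor :: "('o, 'm, 'x) acat_scheme \<Rightarrow> 'm \<Rightarrow> 'm \<Rightarrow> 'm \<times> 'm \<Rightarrow> bool" where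
  "arr_mor C a b f \<longleftrightarrow>
     fst f \<in> hom C (cod C a) (cod C b) \<and> snd f \<in> hom C (dom C a) (dom C b) \<and>
     cmp C b (snd f) = cmp C (fst f) a"

text \<open>2-arrows f \<Rightarrow> g between morphisms a \<rightarrow> b: \<alpha> : A0 \<rightarrow> B1 with
  f1 - g1 = \<alpha> a and f0 - g0 = b \<alpha>.\<close>
definition arr_2cell ::
  "('o, 'm, 'x) acat_scheme \<Rightarrow> 'm \<Rightarrow> 'm \<Rightarrow> 'm \<times> 'm \<Rightarrow> 'm \<times> 'm \<Rightarrow> 'm \<Rightarrow> bool" where
  "arr_2cell C a b f g \<alpha> \<longleftrightarrow>
     \<alpha> \<in> hom C (cod C a) (dom C b) \<and>
     subm C (snd f) (snd g) = cmp C \<alpha> a \<and>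
     subm C (fst f) (fst g) = cmp C b \<alpha>"

text \<open>Precomposition with f = (f0,f1) on 2-arrows: \<alpha> \<circ> f = \<alpha> f0.
  f : a \<rightarrow> b is cofaithful in A^[1]_c if for each object x of A^[1]_c the
  functor - \<circ> f : Hom(b,x) \<rightarrow> Hom(a,x) is faithful, i.e. injective on the
  2-arrows between any two fixed parallel morphisms b \<rightarrow> x.\<close>
definition cofaithful_c :: "('o, 'm, 'x) acat_scheme \<Rightarrow> 'm \<Rightarrow> 'm \<Rightarrow> 'm \<times> 'm \<Rightarrow> bool" where
  "cofaithful_c C a b f \<longleftrightarrow>
     (\<forall>x g g' \<alpha> \<beta>. arrc_obj C x \<longrightarrow> arr_mor C b x g \<longrightarrow> arr_mor C b x g' \<longrightarrow>
        arr_2cell C b x g g' \<alpha> \<longrightarrow> arr_2cell C b x g g' \<beta> \<longrightarrow>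
        cmp C \<alpha> (fst f) = cmp C \<beta> (fst f) \<longrightarrow> \<alpha> = \<beta>)"

end

theory Submission
  imports Defs
begin

(* Fix f = (f0,f1) : a -> b with a : A1 -> A0 and b : B1 -> B0.  Two 2-arrows
   alpha, beta : g => g' between morphisms b -> x are maps B0 -> X1 that both satisfy
   "g0 - g0' = x alpha" and "g1 - g1' = alpha b"; in particular alpha b = beta b.
   Cofaithfulness of f asks that alpha f0 = beta f0 forces alpha = beta.  So the
   condition is really that the pair (f0, b) is jointly epic, and for a biproduct
   A0 (+) B1 this is exactly the statement that the copairing [f0, b] is an epimorphism.

   The two halves of the theorem are then:
   - jointly epic => cofaithful, directly from the description of 2-arrows above;
   - cofaithful => jointly epic, by testing against the object 0 : Y -> Z of A^[1]_c
     (Z a zero object, which is projective): for g, h : B0 -> Y agreeing on f0 and b,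
     both g and h are 2-arrows (0, g b) => (0, 0) between morphisms b -> (0 : Y -> Z). *)

lemma hom_memD:
  assumes "is_category C" "f \<in> hom C X Y"
  shows "X \<in> Ob C" "Y \<in> Ob C" "f \<in> Ar C" "dom C f = X" "cod C f = Y"
  using assms unfolding is_category_def hom_def by auto

lemma comp_hom:
  assumes "is_category C" "f \<in> hom C X Y" "g \<in> hom C Y Z"
  shows "cmp C g f \<in> hom C X Z"
proof -
  have "X \<in> Ob C" "Y \<in> Ob C" "Z \<in> Ob C" using hom_memD assms by metis+
  thus ?thesis using assms unfolding is_category_def by blast
qed

lemma comp_assoc:
  assumes "is_category C" "f \<in> hom C X Y" "g \<in> hom C Y Z" "h \<in> hom C Z W"
  shows "cmp C h (cmp C g f) = cmp C (cmp C h g) f"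
  using assms unfolding is_category_def hom_def by auto

lemma comp_id_right:
  assumes "is_category C" "f \<in> hom C X Y"
  shows "cmp C f (idt C X) = f"
  using assms unfolding is_category_def hom_def by auto

lemma preadditive_category: "is_preadditive C \<Longrightarrow> is_category C"
  unfolding is_preadditive_def by simp

lemma hom_group:
  assumes "is_preadditive C" "X \<in> Ob C" "Y \<in> Ob C"
  shows "zer C X Y \<in> hom C X Y"
    "\<And>f g. f \<in> hom C X Y \<Longrightarrow> g \<in> hom C X Y \<Longrightarrow> addm C f g \<in> hom C X Y"
    "\<And>f. f \<in> hom C X Y \<Longrightarrow> negm C f \<in> hom C X Y"
    "\<And>f g h. f \<in> hom C X Y \<Longrightarrow> g \<in> hom C X Y \<Longrightarrow> h \<in> hom C X Y \<Longrightarrow>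
            addm C (addm C f g) h = addm C f (addm C g h)"
    "\<And>f g. f \<in> hom C X Y \<Longrightarrow> g \<in> hom C X Y \<Longrightarrow> addm C f g = addm C g f"
    "\<And>f. f \<in> hom C X Y \<Longrightarrow> addm C f (zer C X Y) = f"
    "\<And>f. f \<in> hom C X Y \<Longrightarrow> addm C f (negm C f) = zer C X Y"
  using assms unfolding is_preadditive_def by blast+

lemma comp_add:
  assumes "is_preadditive C" "f \<in> hom C X Y" "g \<in> hom C X Y" "h \<in> hom C Y Z" "k \<in> hom C Y Z"
  shows "cmp C h (addm C f g) = addm C (cmp C h f) (cmp C h g)"
    "cmp C (addm C h k) f = addm C (cmp C h f) (cmp C k f)"
proof -
  have "is_category C" using assms preadditive_category by blast
  hence "X \<in> Ob C" "Y \<in> Ob C" "Z \<in> Ob C" using hom_memD assms by metis+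
  thus "cmp C h (addm C f g) = addm C (cmp C h f) (cmp C h g)"
    "cmp C (addm C h k) f = addm C (cmp C h f) (cmp C k f)"
    using assms unfolding is_preadditive_def by blast+
qed

lemma add_idempotent_zero:
  assumes "is_preadditive C" "X \<in> Ob C" "Y \<in> Ob C" "u \<in> hom C X Y" "u = addm C u u"
  shows "u = zer C X Y"
proof -
  note G = hom_group[OF assms(1-3)]
  have "zer C X Y = addm C u (negm C u)" using G(7) assms(4) by metis
  also have "\<dots> = addm C (addm C u u) (negm C u)" using assms(5) by metis
  also have "\<dots> = addm C u (addm C u (negm C u))" using G(3,4) assms(4) by metis
  also have "\<dots> = u" using G(6,7) assms(4) by metis
  finally show ?thesis by simp
qed

lemma comp_zero_right:
  assumes "is_preadditive C" "h \<in> hom C Y Z" "X \<in> Ob C"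
  shows "cmp C h (zer C X Y) = zer C X Z"
proof -
  have c: "is_category C" using assms preadditive_category by blast
  have O: "Y \<in> Ob C" "Z \<in> Ob C" using hom_memD[OF c] assms by metis+
  note G = hom_group[OF assms(1) assms(3) O(1)]
  have h0: "cmp C h (zer C X Y) \<in> hom C X Z" using comp_hom[OF c] G(1) assms by blast
  have "cmp C h (zer C X Y) = cmp C h (addm C (zer C X Y) (zer C X Y))" using G by simp
  also have "\<dots> = addm C (cmp C h (zer C X Y)) (cmp C h (zer C X Y))"
    using comp_add(1)[OF assms(1) G(1) G(1) assms(2) assms(2)] .
  finally show ?thesis using add_idempotent_zero[OF assms(1) assms(3) O(2) h0] by simp
qed

lemma zero_add:
  assumes "is_preadditive C" "f \<in> hom C X Y"
  shows "addm C (zer C X Y) f = f"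
proof -
  have "is_category C" using assms preadditive_category by blast
  hence "X \<in> Ob C" "Y \<in> Ob C" using hom_memD assms by metis+
  thus ?thesis using hom_group[OF assms(1)] assms(2) by metis
qed

lemma subtract_zero:
  assumes "is_preadditive C" "f \<in> hom C X Y"
  shows "subm C f (zer C X Y) = f"
proof -
  have "is_category C" using assms preadditive_category by blast
  hence "X \<in> Ob C" "Y \<in> Ob C" using hom_memD assms by metis+
  note G = hom_group[OF assms(1) this]
  have "negm C (zer C X Y) = zer C X Y"
    using G zero_add[OF assms(1) G(3)[OF G(1)]] by metis
  thus ?thesis unfolding subm_def using G assms by simp
qed

lemma maps_into_zero_unique:
  assumes "is_zero_object C Z" "X \<in> Ob C" "u \<in> hom C X Z" "v \<in> hom C X Z"
  shows "u = v"
  using assms unfolding is_zero_object_def by metis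

lemma maps_from_zero_unique:
  assumes "is_zero_object C Z" "X \<in> Ob C" "u \<in> hom C Z X" "v \<in> hom C Z X"
  shows "u = v"
  using assms unfolding is_zero_object_def by metis

text \<open>A zero object is projective; this makes the maps Y \<rightarrow> 0 objects of A^[1]_c.\<close>
lemma zero_object_projective:
  assumes "is_category C" "is_zero_object C Z"
  shows "is_projective C Z"
  unfolding is_projective_def
proof (intro conjI allI impI)
  show "Z \<in> Ob C" using assms unfolding is_zero_object_def by blast
  fix e f assume e: "is_epi C e" and f: "f \<in> hom C Z (cod C e)"
  have eh: "e \<in> hom C (dom C e) (cod C e)" using e unfolding is_epi_def hom_def by blast
  have "dom C e \<in> Ob C" "cod C e \<in> Ob C" using hom_memD(1,2)[OF assms(1) eh] .
  then obtain g where g: "g \<in> hom C Z (dom C e)"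
    using assms(2) unfolding is_zero_object_def by blast
  have "cmp C e g \<in> hom C Z (cod C e)" using comp_hom[OF assms(1) g eh] .
  hence "cmp C e g = f"
    using maps_from_zero_unique[OF assms(2) \<open>cod C e \<in> Ob C\<close> _ f] by blast
  thus "\<exists>g\<in>hom C Z (dom C e). cmp C e g = f" using g by blast
qed

definition copair :: "('o, 'm, 'x) acat_scheme \<Rightarrow> 'm \<Rightarrow> 'm \<Rightarrow> 'm \<Rightarrow> 'm \<Rightarrow> 'm" where
  "copair C p1 p2 u v = addm C (cmp C u p1) (cmp C v p2)"

definition jointly_epic :: "('o, 'm, 'x) acat_scheme \<Rightarrow> 'm \<Rightarrow> 'm \<Rightarrow> bool" where
  "jointly_epic C u v \<longleftrightarrow> u \<in> Ar C \<and> v \<in> Ar C \<and> cod C u = cod C v \<and>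
     (\<forall>g \<in> Ar C. \<forall>h \<in> Ar C. dom C g = cod C u \<longrightarrow> dom C h = cod C u \<longrightarrow>
        cod C g = cod C h \<longrightarrow> cmp C g u = cmp C h u \<longrightarrow> cmp C g v = cmp C h v \<longrightarrow> g = h)"

locale biproduct_copair =
  fixes C :: "('o, 'm, 'x) acat_scheme" and X Y S W i1 i2 p1 p2 u v
  assumes preadditive: "is_preadditive C"
    and biproduct: "is_biproduct C X Y S i1 i2 p1 p2"
    and u: "u \<in> hom C X W" and v: "v \<in> hom C Y W"
begin

lemma category: "is_category C"
  using preadditive preadditive_category by blast

lemma inj_proj:
  "i1 \<in> hom C X S" "i2 \<in> hom C Y S" "p1 \<in> hom C S X" "p2 \<in> hom C S Y"
  "cmp C p1 i1 = idt C X" "cmp C p2 i2 = idt C Y"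
  "cmp C p1 i2 = zer C Y X" "cmp C p2 i1 = zer C X Y"
  using biproduct unfolding is_biproduct_def by simp_all

lemma objects: "X \<in> Ob C" "Y \<in> Ob C" "S \<in> Ob C" "W \<in> Ob C"
  using hom_memD(1,2)[OF category inj_proj(1)] hom_memD(1)[OF category inj_proj(2)]
    hom_memD(2)[OF category u] by simp_all

lemma summands_hom: "cmp C u p1 \<in> hom C S W" "cmp C v p2 \<in> hom C S W"
  using comp_hom[OF category inj_proj(3) u] comp_hom[OF category inj_proj(4) v] .

lemma copair_hom: "copair C p1 p2 u v \<in> hom C S W"
  unfolding copair_def using hom_group(2)[OF preadditive objects(3,4)] summands_hom .

lemma copair_inj1: "cmp C (copair C p1 p2 u v) i1 = u"
proof -
  have "cmp C (copair C p1 p2 u v) i1 = addm C (cmp C (cmp C u p1) i1) (cmp C (cmp C v p2) i1)"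
    unfolding copair_def using comp_add(2)[OF preadditive inj_proj(1,1) summands_hom] .
  also have "cmp C (cmp C u p1) i1 = u"
    using comp_assoc[OF category inj_proj(1,3) u] inj_proj(5) comp_id_right[OF category u] by simp
  also have "cmp C (cmp C v p2) i1 = zer C X W"
    using comp_assoc[OF category inj_proj(1,4) v] inj_proj(8)
      comp_zero_right[OF preadditive v objects(1)] by simp
  finally show ?thesis using hom_group(6)[OF preadditive objects(1,4) u] by simp
qed

lemma copair_inj2: "cmp C (copair C p1 p2 u v) i2 = v"
proof -
  have "cmp C (copair C p1 p2 u v) i2 = addm C (cmp C (cmp C u p1) i2) (cmp C (cmp C v p2) i2)"
    unfolding copair_def using comp_add(2)[OF preadditive inj_proj(2,2) summands_hom] .
  also have "cmp C (cmp C v p2) i2 = v"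
    using comp_assoc[OF category inj_proj(2,4) v] inj_proj(6) comp_id_right[OF category v] by simp
  also have "cmp C (cmp C u p1) i2 = zer C Y W"
    using comp_assoc[OF category inj_proj(2,3) u] inj_proj(7)
      comp_zero_right[OF preadditive u objects(2)] by simp
  finally show ?thesis using zero_add[OF preadditive v] by simp
qed

lemma comp_copair:
  assumes k: "k \<in> hom C W V"
  shows "cmp C k (copair C p1 p2 u v) = copair C p1 p2 (cmp C k u) (cmp C k v)"
proof -
  have "cmp C k (copair C p1 p2 u v) = addm C (cmp C k (cmp C u p1)) (cmp C k (cmp C v p2))"
    unfolding copair_def using comp_add(1)[OF preadditive summands_hom k k] .
  thus ?thesis unfolding copair_def
    using comp_assoc[OF category inj_proj(3) u k] comp_assoc[OF category inj_proj(4) v k] by simp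
qed

lemma epi_copair_iff_jointly_epic:
  "is_epi C (copair C p1 p2 u v) \<longleftrightarrow> jointly_epic C u v"
proof
  assume epi: "is_epi C (copair C p1 p2 u v)"
  show "jointly_epic C u v" unfolding jointly_epic_def
  proof (intro conjI ballI impI)
    show "u \<in> Ar C" "v \<in> Ar C" "cod C u = cod C v" using u v unfolding hom_def by auto
    fix g h assume "g \<in> Ar C" "h \<in> Ar C" "dom C g = cod C u" "dom C h = cod C u"
      "cod C g = cod C h" and gu: "cmp C g u = cmp C h u" and gv: "cmp C g v = cmp C h v"
    hence gh: "g \<in> hom C W (cod C g)" "h \<in> hom C W (cod C g)" using u unfolding hom_def by auto
    have "cmp C g (copair C p1 p2 u v) = cmp C h (copair C p1 p2 u v)"
      using comp_copair[OF gh(1)] comp_copair[OF gh(2)] gu gv by simp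
    thus "g = h" using epi gh copair_hom unfolding is_epi_def hom_def by auto
  qed
next
  assume je: "jointly_epic C u v"
  show "is_epi C (copair C p1 p2 u v)" unfolding is_epi_def
  proof (intro conjI ballI impI)
    show "copair C p1 p2 u v \<in> Ar C" using copair_hom unfolding hom_def by blast
    fix g h assume "g \<in> Ar C" "h \<in> Ar C" "dom C g = cod C (copair C p1 p2 u v)"
      "dom C h = cod C (copair C p1 p2 u v)" "cod C g = cod C h"
      and eq: "cmp C g (copair C p1 p2 u v) = cmp C h (copair C p1 p2 u v)"
    hence gh: "g \<in> hom C W (cod C g)" "h \<in> hom C W (cod C g)"
      using copair_hom unfolding hom_def by auto
    have "cmp C g u = cmp C h u"
      using comp_assoc[OF category inj_proj(1) copair_hom gh(1)]
        comp_assoc[OF category inj_proj(1) copair_hom gh(2)] eq copair_inj1 by simp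
    moreover have "cmp C g v = cmp C h v"
      using comp_assoc[OF category inj_proj(2) copair_hom gh(1)]
        comp_assoc[OF category inj_proj(2) copair_hom gh(2)] eq copair_inj2 by simp
    ultimately show "g = h" using je gh u unfolding jointly_epic_def hom_def by auto
  qed
qed

end

lemma two_cells_agree_on_source:
  assumes "arr_2cell C b x g g' \<alpha>" "arr_2cell C b x g g' \<beta>"
  shows "cmp C \<alpha> b = cmp C \<beta> b"
  using assms unfolding arr_2cell_def by simp

lemma jointly_epic_imp_cofaithful:
  assumes "jointly_epic C (fst f) b"
  shows "cofaithful_c C a b f"
  unfolding cofaithful_c_def
proof (intro allI impI)
  fix x g g' \<alpha> \<beta>
  assume "arrc_obj C x" "arr_mor C b x g" "arr_mor C b x g'"
    and \<alpha>: "arr_2cell C b x g g' \<alpha>" and \<beta>: "arr_2cell C b x g g' \<beta>"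
    and on_f0: "cmp C \<alpha> (fst f) = cmp C \<beta> (fst f)"
  have "\<alpha> \<in> hom C (cod C b) (dom C x)" "\<beta> \<in> hom C (cod C b) (dom C x)"
    using \<alpha> \<beta> unfolding arr_2cell_def by auto
  thus "\<alpha> = \<beta>"
    using assms on_f0 two_cells_agree_on_source[OF \<alpha> \<beta>]
    unfolding jointly_epic_def hom_def by auto
qed

text \<open>Given g, h : B0 \<rightarrow> Y agreeing on f0 and b, test against the object 0 : Y \<rightarrow> Z of A^[1]_c:
  both g and h are 2-arrows (0, g b) \<Rightarrow> (0, 0) between morphisms b \<rightarrow> (0 : Y \<rightarrow> Z), and they
  agree after f0, so cofaithfulness identifies them.\<close>
lemma cofaithful_imp_jointly_epic:
  assumes pre: "is_preadditive C" and Z: "is_zero_object C Z"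
    and b: "b \<in> Ar C" and f0: "fst f \<in> hom C A0 (cod C b)"
    and cf: "cofaithful_c C a b f"
  shows "jointly_epic C (fst f) b"
  unfolding jointly_epic_def
proof (intro conjI ballI impI)
  define B1 B0 where "B1 = dom C b" and "B0 = cod C b"
  have c: "is_category C" using pre preadditive_category by blast
  have bh: "b \<in> hom C B1 B0" using b unfolding hom_def B1_def B0_def by blast
  have OB1: "B1 \<in> Ob C" and OB0: "B0 \<in> Ob C" and OZ: "Z \<in> Ob C"
    using hom_memD[OF c bh] Z unfolding is_zero_object_def by auto
  show "fst f \<in> Ar C" "b \<in> Ar C" "cod C (fst f) = cod C b" using f0 b unfolding hom_def by auto
  fix g h assume "g \<in> Ar C" "h \<in> Ar C" "dom C g = cod C (fst f)" "dom C h = cod C (fst f)"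
    "cod C g = cod C h" and on_f0: "cmp C g (fst f) = cmp C h (fst f)"
    and on_b: "cmp C g b = cmp C h b"
  define Y where "Y = cod C g"
  have gh: "g \<in> hom C B0 Y" "h \<in> hom C B0 Y"
    using \<open>g \<in> Ar C\<close> \<open>h \<in> Ar C\<close> \<open>dom C g = _\<close> \<open>dom C h = _\<close> \<open>cod C g = _\<close> f0
    unfolding hom_def Y_def B0_def by auto
  have OY: "Y \<in> Ob C" using hom_memD[OF c gh(1)] by simp
  define x where "x = zer C Y Z"
  have xh: "x \<in> hom C Y Z" unfolding x_def using hom_group(1)[OF pre OY OZ] .
  have x_obj: "arrc_obj C x"
    using xh zero_object_projective[OF c Z] unfolding arrc_obj_def hom_def by auto
  have z0: "zer C B0 Z \<in> hom C B0 Z" using hom_group(1)[OF pre OB0 OZ] .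
  have gb: "cmp C g b \<in> hom C B1 Y" using comp_hom[OF c bh gh(1)] .
  text \<open>Every y : B1 \<rightarrow> Y gives a morphism (0, y) : b \<rightarrow> x, since maps into Z coincide.\<close>
  have mor: "arr_mor C b x (zer C B0 Z, y)" if y: "y \<in> hom C B1 Y" for y
  proof -
    have "cmp C x y = cmp C (zer C B0 Z) b"
      using maps_into_zero_unique[OF Z OB1 comp_hom[OF c y xh] comp_hom[OF c bh z0]] .
    thus ?thesis unfolding arr_mor_def using y z0 xh B0_def B1_def unfolding hom_def by simp
  qed
  have cell: "arr_2cell C b x (zer C B0 Z, cmp C g b) (zer C B0 Z, zer C B1 Y) k"
    if k: "k \<in> hom C B0 Y" and kb: "cmp C k b = cmp C g b" for k
  proof -
    have diff1: "subm C (cmp C g b) (zer C B1 Y) = cmp C k b"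
      using subtract_zero[OF pre gb] kb by simp
    have "subm C (zer C B0 Z) (zer C B0 Z) \<in> hom C B0 Z"
      unfolding subm_def using hom_group[OF pre OB0 OZ] by blast
    hence diff0: "subm C (zer C B0 Z) (zer C B0 Z) = cmp C x k"
      using maps_into_zero_unique[OF Z OB0 _ comp_hom[OF c k xh]] by blast
    show ?thesis unfolding arr_2cell_def using k diff1 diff0 xh B0_def unfolding hom_def by simp
  qed
  show "g = h"
    using cf x_obj mor[OF gb] mor[OF hom_group(1)[OF pre OB1 OY]]
      cell[OF gh(1) refl] cell[OF gh(2) on_b[symmetric]] on_f0
    unfolding cofaithful_c_def by blast
qed

theorem lemma3p4:
  fixes C :: "('o, 'm) acat"
    and a b f0 f1 :: 'm
  assumes "is_abelian C"
    and "enough_projectives C"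
    and "arrc_obj C a" and "arrc_obj C b"
    and "arr_mor C a b (f0, f1)"
  shows "\<forall>S i1 i2 p1 p2.
           is_biproduct C (cod C a) (dom C b) S i1 i2 p1 p2 \<longrightarrow>
           (cofaithful_c C a b (f0, f1) \<longleftrightarrow>
            is_epi C (addm C (cmp C f0 p1) (cmp C b p2)))"
proof (intro allI impI)
  fix S i1 i2 p1 p2
  assume bp: "is_biproduct C (cod C a) (dom C b) S i1 i2 p1 p2"
  have pre: "is_preadditive C" using assms(1) unfolding is_abelian_def by blast
  obtain Z where Z: "is_zero_object C Z" using assms(1) unfolding is_abelian_def by blast
  have b: "b \<in> Ar C" using assms(4) unfolding arrc_obj_def by blast
  have f0: "f0 \<in> hom C (cod C a) (cod C b)" using assms(5) unfolding arr_mor_def by simp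
  interpret biproduct_copair C "cod C a" "dom C b" S "cod C b" i1 i2 p1 p2 f0 b
    using pre bp f0 b unfolding biproduct_copair_def hom_def by blast
  have "cofaithful_c C a b (f0, f1) \<longleftrightarrow> jointly_epic C f0 b"
    using jointly_epic_imp_cofaithful[of C "(f0, f1)"]
      cofaithful_imp_jointly_epic[OF pre Z b, of "(f0, f1)"] f0 by auto
  also have "\<dots> \<longleftrightarrow> is_epi C (copair C p1 p2 f0 b)"
    using epi_copair_iff_jointly_epic by simp
  finally show "cofaithful_c C a b (f0, f1) \<longleftrightarrow> is_epi C (addm C (cmp C f0 p1) (cmp C b p2))"
    unfolding copair_def .
qed

end
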